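(* Let $r\in\mathbb N_{>0}$, let $\lambda\in\pi\mathbb N_{>0}$ or $\lambda\in\lambda_0+2\pi\mathbb Z$ with $\lambda_0\in\{\pi/3,\pi/2,2\pi/3\}$, and choose $\mu,\nu\in\mathbb R$ and $\xi_0=x_0+iy_0$ such that: (i) if $\lambda\in\pi\mathbb N_{>0}$: $\nu>0$ and $x_0,y_0\in\frac1r\mathbb Z$; (ii) if $\lambda\in\pi/2+2\pi\mathbb Z$: $\mu+i\nu=i$ and $x_0,y_0\in\frac1r\mathbb Z$; (iii) if $\lambda\in\pi/3+2\pi\mathbb Z$: $\mu+i\nu=e^{i\pi/3}$, $x_0\in\frac12+\frac1r\mathbb Z$, $y_0\in\frac1r\mathbb Z$; (iv) if $\lambda\in 2\pi/3+2\pi\mathbb Z$: $\mu+i\nu=e^{i\pi/3}$, $x_0\in\frac1r\mathbb Z$, $y_0\in\frac12+\frac1r\mathbb Z$. Then for every $z\in\mathbb R$ the elements $l_1=(\tfrac1{\sqrt\nu},0,0)$, $l_2=(-\tfrac{\mu}{\sqrt\nu}+i\sqrt\nu,0,0)$, $l_3=(0,\tfrac1r,0)$, $l_4=(\tfrac{x_0}{\sqrt\nu}-\tfrac{\mu y_0}{\sqrt\nu}+i\sqrt\nu y_0,\,z,\,\lambda)$ generate a lattice in $\mathrm{Osc}_1$.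
   Context: $\mathrm{Osc}_1$ is the set $\mathbb C\times\mathbb R\times\mathbb R$ with multiplication $(\xi_1,z_1,t_1)(\xi_2,z_2,t_2)=(\xi_1+e^{it_1}\xi_2,\ z_1+z_2+\tfrac12\operatorname{Im}(\overline{\xi_1}e^{it_1}\xi_2),\ t_1+t_2)$. A lattice is a discrete subgroup with finite-volume (equivalently, since the group is solvable, compact) quotient. *)

theory Defs
  imports "HOL-Analysis.Analysis"
begin

type_synonym osc = "complex \<times> real \<times> real"

definition osc_mult :: "osc \<Rightarrow> osc \<Rightarrow> osc" where
  "osc_mult p q = (case p of (\<xi>1, z1, t1) \<Rightarrow> case q of (\<xi>2, z2, t2) \<Rightarrow>
     (\<xi>1 + cis t1 * \<xi>2, z1 + z2 + 1/2 * Im (cnj \<xi>1 * cis t1 * \<xi>2), t1 + t2))"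

definition osc_one :: osc where
  "osc_one = (0, 0, 0)"

definition osc_inv :: "osc \<Rightarrow> osc" where
  "osc_inv p = (case p of (\<xi>, z, t) \<Rightarrow> (- (cis (- t) * \<xi>), - z, - t))"

inductive_set osc_gen :: "osc set \<Rightarrow> osc set" for S where
  gen_base: "x \<in> S \<Longrightarrow> x \<in> osc_gen S"
| gen_one: "osc_one \<in> osc_gen S"
| gen_mult: "x \<in> osc_gen S \<Longrightarrow> y \<in> osc_gen S \<Longrightarrow> osc_mult x y \<in> osc_gen S"
| gen_inv: "x \<in> osc_gen S \<Longrightarrow> osc_inv x \<in> osc_gen S"

definition osc_subgroup :: "osc set \<Rightarrow> bool" where
  "osc_subgroup H \<longleftrightarrow> osc_one \<in> H \<and> (\<forall>x\<in>H. \<forall>y\<in>H. osc_mult x y \<in> H)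
     \<and> (\<forall>x\<in>H. osc_inv x \<in> H)"

definition osc_discrete :: "osc set \<Rightarrow> bool" where
  "osc_discrete H \<longleftrightarrow> (\<forall>h\<in>H. \<exists>e>0. ball h e \<inter> H = {h})"

text \<open>Compact quotient Osc_1/H (left cosets gH): some compact K with K H = Osc_1.\<close>
definition osc_cocompact :: "osc set \<Rightarrow> bool" where
  "osc_cocompact H \<longleftrightarrow> (\<exists>K. compact K \<and> (\<forall>g. \<exists>k\<in>K. \<exists>h\<in>H. g = osc_mult k h))"

definition osc_lattice :: "osc set \<Rightarrow> bool" where
  "osc_lattice H \<longleftrightarrow> osc_subgroup H \<and> osc_discrete H \<and> osc_cocompact H"

end

theory Submission
  imports Defs
begin

text \<open>
  The \<open>\<xi>\<close>-coordinates of \<open>l\<^sub>1, l\<^sub>2\<close> span a lattice \<open>\<Lambda> \<subseteq> \<complex>\<close> of covolume 1, and in each of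
  the four cases \<open>\<Lambda>\<close> is invariant under the rotation \<open>cis \<lambda>\<close>: \<open>cis \<lambda> = \<plusminus>1\<close> preserves every
  lattice, while for \<open>\<lambda> \<in> \<pi>/2 + 2\<pi>\<int>\<close> and \<open>\<lambda> \<in> \<pi>/3 \<int>\<close> the conditions on \<open>\<mu> + i\<nu>\<close> make \<open>\<Lambda>\<close> the
  square resp. hexagonal lattice. The conditions on \<open>x\<^sub>0, y\<^sub>0\<close> say \<open>2r \<xi>\<^sub>4 \<in> \<Lambda>\<close>.
  Hence the generated group lies in the set of \<open>(\<xi>, w, k\<lambda>)\<close> with \<open>\<xi> \<in> (2r)\<^sup>-\<^sup>1\<Lambda>\<close> and
  \<open>w \<in> kz + (8r\<^sup>2)\<^sup>-\<^sup>1\<int>\<close>; this set is a subgroup (rotation invariance of \<open>\<Lambda>\<close>, and the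
  symplectic form \<open>Im (cnj u * v)\<close> takes values in \<open>(2r)\<^sup>-\<^sup>2\<int>\<close> on \<open>(2r)\<^sup>-\<^sup>1\<Lambda>\<close>) whose points are
  uniformly separated, which gives discreteness. For cocompactness, any element can be
  moved into a compact box by right multiplication: first a power of \<open>l\<^sub>4\<close> brings the angle
  into \<open>[0, |\<lambda>|]\<close>, then an element over \<open>\<Lambda>\<close> brings \<open>\<xi>\<close> close to 0, and finally a power of
  the central element \<open>l\<^sub>3\<close> brings the centre coordinate into \<open>[0, 1/r]\<close>.
\<close>

lemma osc_mult_apply [simp]:
  "osc_mult (\<xi>1, z1, t1) (\<xi>2, z2, t2) =
     (\<xi>1 + cis t1 * \<xi>2, z1 + z2 + 1/2 * Im (cnj \<xi>1 * cis t1 * \<xi>2), t1 + t2)"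
  by (simp add: osc_mult_def)

lemma osc_inv_apply [simp]: "osc_inv (\<xi>, z, t) = (- (cis (- t) * \<xi>), - z, - t)"
  by (simp add: osc_inv_def)

lemma osc_mult_assoc: "osc_mult (osc_mult p q) u = osc_mult p (osc_mult q u)"
proof -
  obtain \<xi>1 z1 t1 \<xi>2 z2 t2 \<xi>3 z3 t3 where p: "p = (\<xi>1, z1, t1)" and q: "q = (\<xi>2, z2, t2)"
    and u: "u = (\<xi>3, z3, t3)"
    by (metis prod.exhaust)
  have "cnj (\<xi>1 + cis t1 * \<xi>2) * cis (t1 + t2) * \<xi>3 =
        cnj \<xi>1 * cis t1 * (cis t2 * \<xi>3) + cnj (cis t1) * cis t1 * (cnj \<xi>2 * cis t2 * \<xi>3)"
    by (simp add: algebra_simps flip: cis_mult)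
  then have "Im (cnj (\<xi>1 + cis t1 * \<xi>2) * cis (t1 + t2) * \<xi>3) =
        Im (cnj \<xi>1 * cis t1 * (cis t2 * \<xi>3)) + Im (cnj \<xi>2 * cis t2 * \<xi>3)"
    by (simp add: cis_cnj cis_mult)
  then show ?thesis
    by (simp add: p q u algebra_simps flip: cis_mult)
qed

lemma osc_mult_inv_cancel_right: "osc_mult (osc_mult g h) (osc_inv h) = g"
proof -
  obtain \<xi>1 z1 t1 \<xi>2 z2 t2 where g: "g = (\<xi>1, z1, t1)" and h: "h = (\<xi>2, z2, t2)"
    by (metis prod.exhaust)
  have rot: "cis (t1 + t2) * cis (- t2) = cis t1"
    by (simp add: cis_mult)
  have "cnj (cis t1) * cis t1 = 1"
    by (simp add: cis_cnj cis_mult)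
  then have "cnj (\<xi>1 + cis t1 * \<xi>2) * cis (t1 + t2) * (- (cis (- t2) * \<xi>2))
      = - (cnj \<xi>1 * cis t1 * \<xi>2) - cnj \<xi>2 * \<xi>2"
    by (simp add: algebra_simps flip: rot)
  moreover have "cis (t1 + t2) * - (cis (- t2) * \<xi>2) = - (cis t1 * \<xi>2)"
    by (simp flip: rot)
  ultimately show ?thesis
    unfolding g h osc_mult_apply osc_inv_apply by (simp only:) (simp add: field_simps)
qed

lemma osc_subgroup_osc_gen: "osc_subgroup (osc_gen S)"
  by (simp add: osc_subgroup_def osc_gen.intros)

lemma osc_gen_minimal: "S \<subseteq> H \<Longrightarrow> osc_subgroup H \<Longrightarrow> osc_gen S \<subseteq> H"
proof
  fix x assume "x \<in> osc_gen S" "S \<subseteq> H" "osc_subgroup H"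
  then show "x \<in> H"
    by (induction rule: osc_gen.induct) (auto simp: osc_subgroup_def)
qed

lemma osc_subgroup_power_central:
  assumes H: "osc_subgroup H" and p: "(v, w, 0) \<in> H"
  shows "(of_int k * v, of_int k * w, 0) \<in> H"
proof (induction k rule: int_induct[where k = 0])
  case base
  show ?case using H by (simp add: osc_subgroup_def osc_one_def)
next
  case (step1 i)
  then have "osc_mult (of_int i * v, of_int i * w, 0) (v, w, 0) \<in> H"
    using H p unfolding osc_subgroup_def by blast
  then show ?case by (simp add: algebra_simps)
next
  case (step2 i)
  then have "osc_mult (of_int i * v, of_int i * w, 0) (osc_inv (v, w, 0)) \<in> H"
    using H p unfolding osc_subgroup_def by blast
  then show ?case by (simp add: algebra_simps)
qed

lemma osc_subgroup_power_angle:
  assumes H: "osc_subgroup H" and p: "(\<xi>, w, t) \<in> H"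
  shows "\<exists>h\<in>H. snd (snd h) = of_int k * t"
proof (induction k rule: int_induct[where k = 0])
  case base
  show ?case using H by (auto simp: osc_subgroup_def osc_one_def intro!: bexI[of _ osc_one])
next
  case (step1 i)
  then obtain \<eta> u where "(\<eta>, u, of_int i * t) \<in> H" by auto
  then have "osc_mult (\<eta>, u, of_int i * t) (\<xi>, w, t) \<in> H"
    using H p unfolding osc_subgroup_def by blast
  then show ?case by (force simp: algebra_simps)
next
  case (step2 i)
  then obtain \<eta> u where "(\<eta>, u, of_int i * t) \<in> H" by auto
  then have "osc_mult (\<eta>, u, of_int i * t) (osc_inv (\<xi>, w, t)) \<in> H"
    using H p unfolding osc_subgroup_def by blast
  then show ?case by (force simp: algebra_simps)
qed

definition int_lattice :: "complex \<Rightarrow> complex \<Rightarrow> complex set" where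
  "int_lattice a b = {of_int m * a + of_int n * b | m n. True}"

lemma int_lattice_memI: "u = of_int m * a + of_int n * b \<Longrightarrow> u \<in> int_lattice a b"
  unfolding int_lattice_def by blast

lemma int_lattice_memE:
  assumes "u \<in> int_lattice a b"
  obtains m n :: int where "u = of_int m * a + of_int n * b"
  using assms unfolding int_lattice_def by blast

lemma int_lattice_zero [simp]: "0 \<in> int_lattice a b"
  by (rule int_lattice_memI[of _ 0 _ 0]) simp

lemma int_lattice_generators [simp]: "a \<in> int_lattice a b" "b \<in> int_lattice a b"
  by (rule int_lattice_memI[of _ 1 _ 0], simp) (rule int_lattice_memI[of _ 0 _ 1], simp)

lemma int_lattice_add: "u \<in> int_lattice a b \<Longrightarrow> v \<in> int_lattice a b \<Longrightarrow> u + v \<in> int_lattice a b"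
  by (elim int_lattice_memE, rule int_lattice_memI[of _ "_ + _" _ "_ + _"]) (simp add: algebra_simps)

lemma int_lattice_uminus: "u \<in> int_lattice a b \<Longrightarrow> - u \<in> int_lattice a b"
  by (elim int_lattice_memE, rule int_lattice_memI[of _ "- _" _ "- _"]) (simp add: algebra_simps)

lemma int_lattice_diff: "u \<in> int_lattice a b \<Longrightarrow> v \<in> int_lattice a b \<Longrightarrow> u - v \<in> int_lattice a b"
  using int_lattice_add[of u a b "- v"] int_lattice_uminus by simp

lemma int_lattice_mult_closed:
  assumes "c * a \<in> int_lattice a b" "c * b \<in> int_lattice a b" "u \<in> int_lattice a b"
  shows "c * u \<in> int_lattice a b"
proof -
  obtain m n :: int where u: "u = of_int m * a + of_int n * b"
    using assms(3) by (rule int_lattice_memE)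
  obtain p q p' q' :: int where ca: "c * a = of_int p * a + of_int q * b"
    and cb: "c * b = of_int p' * a + of_int q' * b"
    using assms(1,2) by (metis int_lattice_memE)
  have "c * u = of_int m * (c * a) + of_int n * (c * b)"
    by (simp add: u algebra_simps)
  also have "\<dots> = of_int m * (of_int p * a + of_int q * b) + of_int n * (of_int p' * a + of_int q' * b)"
    by (simp only: ca cb)
  also have "\<dots> = of_int (m * p + n * p') * a + of_int (m * q + n * q') * b"
    by (simp add: algebra_simps)
  finally show ?thesis by (rule int_lattice_memI)
qed

lemma int_lattice_scale: "int_lattice (c * a) (c * b) = (*) c ` int_lattice a b"
proof
  show "int_lattice (c * a) (c * b) \<subseteq> (*) c ` int_lattice a b"
  proof
    fix u assume "u \<in> int_lattice (c * a) (c * b)"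
    then obtain m n :: int where "u = of_int m * (c * a) + of_int n * (c * b)"
      by (rule int_lattice_memE)
    then have "u = c * (of_int m * a + of_int n * b)"
      by (simp add: algebra_simps)
    then show "u \<in> (*) c ` int_lattice a b"
      using int_lattice_memI by blast
  qed
  show "(*) c ` int_lattice a b \<subseteq> int_lattice (c * a) (c * b)"
  proof
    fix u assume "u \<in> (*) c ` int_lattice a b"
    then obtain m n :: int where "u = c * (of_int m * a + of_int n * b)"
      by (metis imageE int_lattice_memE)
    then show "u \<in> int_lattice (c * a) (c * b)"
      by (intro int_lattice_memI[of _ m _ n]) (simp add: algebra_simps)
  qed
qed

lemma int_lattice_mult_image:
  assumes "c \<noteq> 0"
    and "c * a \<in> int_lattice a b" "c * b \<in> int_lattice a b"
    and "inverse c * a \<in> int_lattice a b" "inverse c * b \<in> int_lattice a b"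
  shows "(*) c ` int_lattice a b = int_lattice a b"
proof
  show "(*) c ` int_lattice a b \<subseteq> int_lattice a b"
    using assms(2,3) int_lattice_mult_closed by blast
  show "int_lattice a b \<subseteq> (*) c ` int_lattice a b"
  proof
    fix u assume "u \<in> int_lattice a b"
    then have "inverse c * u \<in> int_lattice a b"
      using assms(4,5) int_lattice_mult_closed by blast
    moreover have "u = c * (inverse c * u)"
      using assms(1) by simp
    ultimately show "u \<in> (*) c ` int_lattice a b" by blast
  qed
qed

lemma int_lattice_rotation_power:
  assumes rot: "(*) (cis \<theta>) ` int_lattice a b = int_lattice a b" and u: "u \<in> int_lattice a b"
  shows "cis (of_int k * \<theta>) * u \<in> int_lattice a b"
proof (induction k rule: int_induct[where k = 0])
  case base
  show ?case using u by simp
next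
  case (step1 i)
  have "cis (of_int (i + 1) * \<theta>) * u = cis \<theta> * (cis (of_int i * \<theta>) * u)"
    by (simp add: algebra_simps flip: cis_mult)
  then show ?case using step1 rot by auto
next
  case (step2 i)
  then obtain v where v: "v \<in> int_lattice a b" "cis (of_int i * \<theta>) * u = cis \<theta> * v"
    using rot by blast
  have "cis (of_int (i - 1) * \<theta>) = cis (- \<theta>) * cis (of_int i * \<theta>)"
    by (simp add: cis_mult algebra_simps)
  then have "cis (of_int (i - 1) * \<theta>) * u = cis (- \<theta>) * (cis (of_int i * \<theta>) * u)"
    by simp
  also have "\<dots> = v"
    by (simp add: v(2) cis_mult flip: mult.assoc)
  finally show ?case using v(1) by simp
qed

lemma int_lattice_rotation_power_image:
  assumes "(*) (cis \<theta>) ` int_lattice a b = int_lattice a b"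
  shows "(*) (cis (of_int n * \<theta>)) ` int_lattice a b = int_lattice a b"
proof
  show "(*) (cis (of_int n * \<theta>)) ` int_lattice a b \<subseteq> int_lattice a b"
    using int_lattice_rotation_power[OF assms] by blast
  show "int_lattice a b \<subseteq> (*) (cis (of_int n * \<theta>)) ` int_lattice a b"
  proof
    fix u assume "u \<in> int_lattice a b"
    then have "cis (of_int (- n) * \<theta>) * u \<in> int_lattice a b"
      by (rule int_lattice_rotation_power[OF assms])
    moreover have "u = cis (of_int n * \<theta>) * (cis (of_int (- n) * \<theta>) * u)"
      by (simp add: cis_mult flip: mult.assoc)
    ultimately show "u \<in> (*) (cis (of_int n * \<theta>)) ` int_lattice a b" by blast
  qed
qed

lemma Im_cnj_mult_int_lattice:
  assumes "u \<in> int_lattice a b" "v \<in> int_lattice a b"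
  shows "\<exists>j::int. Im (cnj u * v) = of_int j * Im (cnj a * b)"
proof -
  obtain m n m' n' :: int where u: "u = of_int m * a + of_int n * b" and v: "v = of_int m' * a + of_int n' * b"
    using assms by (metis int_lattice_memE)
  have "cnj u * v = of_int (m * m') * (cnj a * a) + of_int (n * n') * (cnj b * b)
      + of_int (m * n') * (cnj a * b) + of_int (n * m') * cnj (cnj a * b)"
    by (simp add: u v algebra_simps)
  then have "Im (cnj u * v) = of_int (m * n' - n * m') * Im (cnj a * b)"
    by (simp add: algebra_simps del: complex_cnj_mult)
  then show ?thesis by blast
qed

lemma int_lattice_norm_lower_bound:
  assumes \<omega>: "Im (cnj a * b) \<noteq> 0"
  shows "\<exists>\<rho>>0. \<forall>u\<in>int_lattice a b. u \<noteq> 0 \<longrightarrow> \<rho> \<le> norm u"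
proof (intro exI conjI ballI impI)
  let ?\<omega> = "Im (cnj a * b)"
  have "a \<noteq> 0" using \<omega> by auto
  then show "\<bar>?\<omega>\<bar> / (norm a + norm b) > 0"
    using \<omega> by (simp add: add_pos_nonneg)
  fix u assume "u \<in> int_lattice a b" "u \<noteq> 0"
  then obtain m n :: int where u: "u = of_int m * a + of_int n * b" and "m \<noteq> 0 \<or> n \<noteq> 0"
    by (metis int_lattice_memE mult_zero_left of_int_0 add_0)
  have le_int_mult: "\<bar>?\<omega>\<bar> \<le> \<bar>of_int k * ?\<omega>\<bar>" if "k \<noteq> 0" for k :: int
  proof -
    have "1 \<le> \<bar>real_of_int k\<bar>" using that by linarith
    then show ?thesis
      using mult_right_mono[of 1 "\<bar>real_of_int k\<bar>" "\<bar>?\<omega>\<bar>"] by (simp add: abs_mult)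
  qed
  have Im_bound: "\<bar>Im (cnj v * u)\<bar> \<le> norm v * norm u" for v
    using abs_Im_le_cmod[of "cnj v * u"] by (simp add: norm_mult)
  \<comment> \<open>Pairing with \<open>a\<close> and \<open>b\<close> recovers the coordinates of \<open>u\<close>, scaled by the covolume.\<close>
  have "Im (cnj a * u) = of_int n * ?\<omega>" "Im (cnj b * u) = - (of_int m * ?\<omega>)"
    by (simp_all add: u algebra_simps)
  then have "\<bar>?\<omega>\<bar> \<le> norm a * norm u \<or> \<bar>?\<omega>\<bar> \<le> norm b * norm u"
    using \<open>m \<noteq> 0 \<or> n \<noteq> 0\<close> le_int_mult Im_bound[of a] Im_bound[of b]
    by (metis abs_minus_cancel order_trans)
  moreover have "norm a * norm u \<le> (norm a + norm b) * norm u" "norm b * norm u \<le> (norm a + norm b) * norm u"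
    by (simp_all add: mult_right_mono)
  ultimately have "\<bar>?\<omega>\<bar> \<le> (norm a + norm b) * norm u"
    by linarith
  then show "\<bar>?\<omega>\<bar> / (norm a + norm b) \<le> norm u"
    using \<open>a \<noteq> 0\<close> by (simp add: divide_le_eq add_pos_nonneg mult.commute)
qed

lemma int_lattice_covering:
  assumes \<omega>: "Im (cnj a * b) \<noteq> 0"
  shows "\<exists>\<eta>\<in>int_lattice a b. norm (\<zeta> - \<eta>) \<le> norm a + norm b"
proof
  define x where "x = - Im (cnj b * \<zeta>) / Im (cnj a * b)"
  define y where "y = Im (cnj a * \<zeta>) / Im (cnj a * b)"
  have "of_real (Im (cnj a * b)) * \<zeta> = of_real (- Im (cnj b * \<zeta>)) * a + of_real (Im (cnj a * \<zeta>)) * b"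
    by (simp add: complex_eq_iff algebra_simps)
  moreover have "\<zeta> = of_real (p / w) * a + of_real (q / w) * b"
    if "w \<noteq> 0" "of_real w * \<zeta> = of_real p * a + of_real q * b" for p q w :: real
  proof -
    have "\<zeta> = of_real (1 / w) * (of_real w * \<zeta>)"
      using that(1) by (simp flip: mult.assoc of_real_mult)
    also have "\<dots> = of_real (1 / w * p) * a + of_real (1 / w * q) * b"
      by (simp only: that(2) distrib_left of_real_mult mult.assoc)
    finally show ?thesis by simp
  qed
  ultimately have \<zeta>: "\<zeta> = of_real x * a + of_real y * b"
    using \<omega> unfolding x_def y_def by blast
  show "of_int \<lfloor>x\<rfloor> * a + of_int \<lfloor>y\<rfloor> * b \<in> int_lattice a b"
    by (rule int_lattice_memI) (rule refl)
  have "\<zeta> - (of_int \<lfloor>x\<rfloor> * a + of_int \<lfloor>y\<rfloor> * b) = of_real (frac x) * a + of_real (frac y) * b"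
    by (simp add: \<zeta> frac_def algebra_simps)
  also have "norm \<dots> \<le> frac x * norm a + frac y * norm b"
    by (rule norm_triangle_le) (simp add: norm_mult frac_ge_0)
  also have "\<dots> \<le> norm a + norm b"
    by (intro add_mono mult_left_le_one_le) (simp_all add: frac_ge_0 frac_lt_1 less_imp_le)
  finally show "norm (\<zeta> - (of_int \<lfloor>x\<rfloor> * a + of_int \<lfloor>y\<rfloor> * b)) \<le> norm a + norm b" .
qed

text \<open>The centre coordinate of a product of grid points picks up \<open>Im (cnj \<xi>\<^sub>1 * cis t\<^sub>1 * \<xi>\<^sub>2) / 2\<close>,
  an integer multiple of half the covolume of the lattice; this fixes its step.\<close>

definition osc_grid :: "complex \<Rightarrow> complex \<Rightarrow> real \<Rightarrow> real \<Rightarrow> osc set" where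
  "osc_grid a b z lam = {(\<xi>, w, t). \<exists>k j :: int. t = of_int k * lam \<and> \<xi> \<in> int_lattice a b
      \<and> w = of_int k * z + of_int j * (Im (cnj a * b) / 2)}"

lemma osc_grid_iff:
  "(\<xi>, w, t) \<in> osc_grid a b z lam \<longleftrightarrow> (\<exists>k j :: int. t = of_int k * lam \<and> \<xi> \<in> int_lattice a b
      \<and> w = of_int k * z + of_int j * (Im (cnj a * b) / 2))"
  by (simp add: osc_grid_def)

lemma osc_grid_subgroup:
  assumes rot: "(*) (cis lam) ` int_lattice a b = int_lattice a b"
  shows "osc_subgroup (osc_grid a b z lam)"
  unfolding osc_subgroup_def
proof (intro conjI ballI)
  let ?c = "Im (cnj a * b) / 2"
  show "osc_one \<in> osc_grid a b z lam"
    by (auto simp: osc_one_def osc_grid_iff intro!: exI[of _ 0])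
  fix p q assume p: "p \<in> osc_grid a b z lam" and q: "q \<in> osc_grid a b z lam"
  obtain \<xi>1 w1 k1 j1 where p: "p = (\<xi>1, w1, of_int k1 * lam)" "\<xi>1 \<in> int_lattice a b"
    "w1 = of_int k1 * z + of_int j1 * ?c"
    using p by (auto simp: osc_grid_def)
  obtain \<xi>2 w2 k2 j2 where q: "q = (\<xi>2, w2, of_int k2 * lam)" "\<xi>2 \<in> int_lattice a b"
    "w2 = of_int k2 * z + of_int j2 * ?c"
    using q by (auto simp: osc_grid_def)
  have rot\<xi>2: "cis (of_int k1 * lam) * \<xi>2 \<in> int_lattice a b"
    using int_lattice_rotation_power[OF rot q(2)] .
  then obtain j where j: "Im (cnj \<xi>1 * (cis (of_int k1 * lam) * \<xi>2)) = of_int j * Im (cnj a * b)"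
    using Im_cnj_mult_int_lattice[OF p(2)] by blast
  show "osc_mult p q \<in> osc_grid a b z lam"
    unfolding osc_grid_iff p(1) q(1) osc_mult_apply
  proof (intro exI conjI)
    show "\<xi>1 + cis (of_int k1 * lam) * \<xi>2 \<in> int_lattice a b"
      using int_lattice_add[OF p(2) rot\<xi>2] .
    show "of_int k1 * lam + of_int k2 * lam = of_int (k1 + k2) * lam"
      by (simp add: algebra_simps)
    show "w1 + w2 + 1 / 2 * Im (cnj \<xi>1 * cis (of_int k1 * lam) * \<xi>2) = of_int (k1 + k2) * z + of_int (j1 + j2 + j) * ?c"
      by (simp only: mult.assoc j p(3) q(3) of_int_add distrib_right)
  qed
  show "osc_inv p \<in> osc_grid a b z lam"
    unfolding osc_grid_iff p(1) osc_inv_apply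
  proof (rule exI[of _ "- k1"], rule exI[of _ "- j1"], intro conjI)
    show "- (cis (- (of_int k1 * lam)) * \<xi>1) \<in> int_lattice a b"
      using int_lattice_uminus[OF int_lattice_rotation_power[OF rot p(2), of "- k1"]] by simp
  qed (simp_all only: p(3) of_int_minus mult_minus_left minus_add_distrib)
qed

lemma int_multiples_close_eq:
  fixes d :: real
  assumes "\<bar>of_int k * d - of_int l * d\<bar> < \<bar>d\<bar>"
  shows "k = l"
proof (rule ccontr)
  assume "k \<noteq> l"
  then have "1 \<le> \<bar>real_of_int (k - l)\<bar>" by linarith
  then have "\<bar>d\<bar> \<le> \<bar>real_of_int (k - l)\<bar> * \<bar>d\<bar>"
    using mult_right_mono[of 1 _ "\<bar>d\<bar>"] by simp
  also have "\<dots> = \<bar>of_int k * d - of_int l * d\<bar>"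
    by (simp add: abs_mult flip: left_diff_distrib)
  finally show False
    using assms by simp
qed

lemma osc_grid_separated:
  assumes \<omega>: "Im (cnj a * b) \<noteq> 0" and lam: "lam \<noteq> 0"
  shows "\<exists>\<delta>>0. \<forall>p\<in>osc_grid a b z lam. \<forall>q\<in>osc_grid a b z lam. dist p q < \<delta> \<longrightarrow> p = q"
proof -
  let ?c = "Im (cnj a * b) / 2"
  obtain \<rho> where \<rho>: "\<rho> > 0" "\<And>u. u \<in> int_lattice a b \<Longrightarrow> u \<noteq> 0 \<Longrightarrow> \<rho> \<le> norm u"
    using int_lattice_norm_lower_bound[OF \<omega>] by blast
  define \<delta> where "\<delta> = Min {\<bar>lam\<bar>, \<bar>?c\<bar>, \<rho>}"
  have "\<delta> > 0"
    using \<omega> lam \<rho>(1) by (simp add: \<delta>_def)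
  moreover have "p = q" if p: "p \<in> osc_grid a b z lam" and q: "q \<in> osc_grid a b z lam"
    and pq: "dist p q < \<delta>" for p q
  proof -
    obtain \<xi>1 w1 k1 j1 where p: "p = (\<xi>1, w1, of_int k1 * lam)" "\<xi>1 \<in> int_lattice a b"
      "w1 = of_int k1 * z + of_int j1 * ?c"
      using p by (auto simp: osc_grid_def)
    obtain \<xi>2 w2 k2 j2 where q: "q = (\<xi>2, w2, of_int k2 * lam)" "\<xi>2 \<in> int_lattice a b"
      "w2 = of_int k2 * z + of_int j2 * ?c"
      using q by (auto simp: osc_grid_def)
    have \<delta>_le: "\<delta> \<le> \<bar>lam\<bar>" "\<delta> \<le> \<bar>?c\<bar>" "\<delta> \<le> \<rho>"
      unfolding \<delta>_def by (rule Min_le; simp)+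
    have "dist \<xi>1 \<xi>2 \<le> dist p q" "dist w1 w2 \<le> dist p q"
      "dist (of_int k1 * lam) (of_int k2 * lam) \<le> dist p q"
      using dist_fst_le[of p q] dist_snd_le[of p q] dist_fst_le[of "snd p" "snd q"]
        dist_snd_le[of "snd p" "snd q"]
      by (simp_all add: p(1) q(1))
    then have "dist \<xi>1 \<xi>2 < \<delta>" "dist w1 w2 < \<delta>" "dist (of_int k1 * lam) (of_int k2 * lam) < \<delta>"
      using pq by linarith+
    then have d: "norm (\<xi>1 - \<xi>2) < \<rho>" "\<bar>w1 - w2\<bar> < \<bar>?c\<bar>"
        "\<bar>of_int k1 * lam - of_int k2 * lam\<bar> < \<bar>lam\<bar>"
      using \<delta>_le dist_norm[of \<xi>1 \<xi>2] dist_real_def[of w1 w2]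
        dist_real_def[of "of_int k1 * lam" "of_int k2 * lam"]
      by linarith+
    have k: "k1 = k2"
      using int_multiples_close_eq[OF d(3)] .
    have j: "j1 = j2"
      using d(2) by (intro int_multiples_close_eq[of j1 ?c j2]) (simp add: p(3) q(3) k)
    have "\<xi>1 = \<xi>2"
      using \<rho>(2)[OF int_lattice_diff[OF p(2) q(2)]] d(1) by force
    then show "p = q"
      by (simp add: p q k j)
  qed
  ultimately show ?thesis by blast
qed

lemma osc_discrete_if_separated:
  assumes "\<exists>\<delta>>0. \<forall>p\<in>D. \<forall>q\<in>D. dist p q < \<delta> \<longrightarrow> p = q" and "H \<subseteq> D"
  shows "osc_discrete H"
  unfolding osc_discrete_def
proof
  fix h assume "h \<in> H"
  obtain \<delta> where "\<delta> > 0" and sep: "\<forall>p\<in>D. \<forall>q\<in>D. dist p q < \<delta> \<longrightarrow> p = q"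
    using assms(1) by blast
  have "x = h" if "x \<in> H" "dist h x < \<delta>" for x
    using sep that \<open>h \<in> H\<close> assms(2) by blast
  then have "ball h \<delta> \<inter> H = {h}"
    using \<open>h \<in> H\<close> \<open>\<delta> > 0\<close> by auto
  then show "\<exists>e>0. ball h e \<inter> H = {h}"
    using \<open>\<delta> > 0\<close> by blast
qed

lemma int_translate_into_Icc:
  fixes t d :: real
  assumes "d \<noteq> 0"
  shows "\<exists>k::int. t + of_int k * d \<in> {0..\<bar>d\<bar>}"
proof -
  have "\<bar>d\<bar> > 0" using assms by simp
  then have "t - of_int \<lfloor>t / \<bar>d\<bar>\<rfloor> * \<bar>d\<bar> \<in> {0..\<bar>d\<bar>}"
    using floor_divide_lower[of "\<bar>d\<bar>" t] floor_divide_upper[of "\<bar>d\<bar>" t] by (simp add: algebra_simps)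
  moreover have "\<exists>k::int. of_int k * d = - (of_int \<lfloor>t / \<bar>d\<bar>\<rfloor> * \<bar>d\<bar>)"
  proof (cases "d > 0")
    case True
    then show ?thesis by (intro exI[of _ "- \<lfloor>t / \<bar>d\<bar>\<rfloor>"]) simp
  next
    case False
    then show ?thesis by (intro exI[of _ "\<lfloor>t / \<bar>d\<bar>\<rfloor>"]) simp
  qed
  ultimately show ?thesis by (metis diff_conv_add_uminus)
qed

lemma osc_subgroup_lattice_lift:
  assumes H: "osc_subgroup H" and "(a, 0, 0) \<in> H" "(b, 0, 0) \<in> H" and "\<eta> \<in> int_lattice a b"
  shows "\<exists>w. (\<eta>, w, 0) \<in> H"
proof -
  obtain m n :: int where \<eta>: "\<eta> = of_int m * a + of_int n * b"
    using assms(4) by (rule int_lattice_memE)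
  have "(of_int m * a, 0, 0) \<in> H" "(of_int n * b, 0, 0) \<in> H"
    using osc_subgroup_power_central[OF H assms(2), of m] osc_subgroup_power_central[OF H assms(3), of n]
    by simp_all
  then have "osc_mult (of_int m * a, 0, 0) (of_int n * b, 0, 0) \<in> H"
    using H unfolding osc_subgroup_def by blast
  then show ?thesis by (auto simp: \<eta>)
qed

lemma osc_subgroup_reduce_angle:
  assumes H: "osc_subgroup H" and "(\<xi>, w, lam) \<in> H" and "lam \<noteq> 0"
  shows "\<exists>h\<in>H. snd (snd (osc_mult g h)) \<in> {0..\<bar>lam\<bar>}"
proof -
  obtain \<xi>0 w0 t0 where g: "g = (\<xi>0, w0, t0)" by (metis prod.exhaust)
  obtain k :: int where k: "t0 + of_int k * lam \<in> {0..\<bar>lam\<bar>}"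
    using int_translate_into_Icc[OF assms(3)] by blast
  obtain \<eta> u where h: "(\<eta>, u, of_int k * lam) \<in> H"
    using osc_subgroup_power_angle[OF H assms(2)] by force
  have "snd (snd (osc_mult g (\<eta>, u, of_int k * lam))) = t0 + of_int k * lam"
    by (simp add: g)
  with h k show ?thesis by metis
qed

lemma osc_subgroup_reduce_position:
  assumes H: "osc_subgroup H" and "(a, 0, 0) \<in> H" "(b, 0, 0) \<in> H" and \<omega>: "Im (cnj a * b) \<noteq> 0"
  shows "\<exists>h\<in>H. osc_mult g h \<in> cball 0 (norm a + norm b) \<times> UNIV \<times> {snd (snd g)}"
proof -
  obtain \<xi> w t where g: "g = (\<xi>, w, t)" by (metis prod.exhaust)
  obtain \<eta> where \<eta>: "\<eta> \<in> int_lattice a b" "norm (- (cis (- t) * \<xi>) - \<eta>) \<le> norm a + norm b"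
    using int_lattice_covering[OF \<omega>] by blast
  obtain u where "(\<eta>, u, 0) \<in> H"
    using osc_subgroup_lattice_lift[OF assms(1-3) \<eta>(1)] by blast
  moreover have "\<xi> + cis t * \<eta> = - cis t * (- (cis (- t) * \<xi>) - \<eta>)"
    by (simp add: algebra_simps cis_mult)
  then have "norm (\<xi> + cis t * \<eta>) \<le> norm a + norm b"
    using \<eta>(2) by (simp add: norm_mult)
  moreover have "osc_mult g (\<eta>, u, 0) = (\<xi> + cis t * \<eta>, w + u + 1/2 * Im (cnj \<xi> * cis t * \<eta>), t)"
    by (simp add: g)
  ultimately show ?thesis by (metis SigmaI UNIV_I g mem_cball_0 singletonI snd_conv)
qed

lemma osc_subgroup_reduce_centre:
  assumes H: "osc_subgroup H" and "(0, \<zeta>, 0) \<in> H" and "\<zeta> \<noteq> 0"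
  shows "\<exists>h\<in>H. osc_mult g h \<in> {fst g} \<times> {0..\<bar>\<zeta>\<bar>} \<times> {snd (snd g)}"
proof -
  obtain \<xi> w t where g: "g = (\<xi>, w, t)" by (metis prod.exhaust)
  obtain p :: int where p: "w + of_int p * \<zeta> \<in> {0..\<bar>\<zeta>\<bar>}"
    using int_translate_into_Icc[OF assms(3)] by blast
  have "(0, of_int p * \<zeta>, 0) \<in> H"
    using osc_subgroup_power_central[OF H assms(2), of p] by simp
  moreover have "osc_mult g (0, of_int p * \<zeta>, 0) = (\<xi>, w + of_int p * \<zeta>, t)"
    by (simp add: g)
  ultimately show ?thesis using p by (metis SigmaI fst_conv g singletonI snd_conv)
qed

lemma osc_cocompact_if_translates_into:
  assumes H: "osc_subgroup H" and "compact K" and "\<And>g. \<exists>h\<in>H. osc_mult g h \<in> K"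
  shows "osc_cocompact H"
  unfolding osc_cocompact_def
proof (intro exI conjI allI)
  fix g
  obtain h where "h \<in> H" "osc_mult g h \<in> K" using assms(3) by blast
  moreover have "osc_inv h \<in> H" using H \<open>h \<in> H\<close> by (simp add: osc_subgroup_def)
  ultimately show "\<exists>k\<in>K. \<exists>h\<in>H. g = osc_mult k h"
    by (metis osc_mult_inv_cancel_right)
qed (rule assms(2))

lemma osc_cocompact_if_generators:
  assumes H: "osc_subgroup H"
    and "(a, 0, 0) \<in> H" "(b, 0, 0) \<in> H" "(0, \<zeta>, 0) \<in> H" "(\<xi>, w, lam) \<in> H"
    and \<omega>: "Im (cnj a * b) \<noteq> 0" and "\<zeta> \<noteq> 0" "lam \<noteq> 0"
  shows "osc_cocompact H"
proof (rule osc_cocompact_if_translates_into[OF H])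
  let ?K = "cball (0::complex) (norm a + norm b) \<times> {0..\<bar>\<zeta>\<bar>} \<times> {0..\<bar>lam\<bar>}"
  show "compact ?K"
    by (intro compact_Times compact_cball compact_Icc)
  fix g
  obtain h1 where h1: "h1 \<in> H" and t1: "snd (snd (osc_mult g h1)) \<in> {0..\<bar>lam\<bar>}"
    using osc_subgroup_reduce_angle[OF H assms(5,8), of g] by (elim bexE)
  define g1 where "g1 = osc_mult g h1"
  obtain h2 where h2: "h2 \<in> H"
    and g2: "osc_mult g1 h2 \<in> cball 0 (norm a + norm b) \<times> UNIV \<times> {snd (snd g1)}"
    using osc_subgroup_reduce_position[OF H assms(2,3) \<omega>, of g1] by (elim bexE)
  define g2 where "g2 = osc_mult g1 h2"
  obtain h3 where h3: "h3 \<in> H"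
    and g3: "osc_mult g2 h3 \<in> {fst g2} \<times> {0..\<bar>\<zeta>\<bar>} \<times> {snd (snd g2)}"
    using osc_subgroup_reduce_centre[OF H assms(4,7), of g2] by (elim bexE)
  have "osc_mult h1 (osc_mult h2 h3) \<in> H"
    using H h1 h2 h3 unfolding osc_subgroup_def by blast
  moreover have "osc_mult g2 h3 \<in> ?K"
    using t1 g2 g3 unfolding g1_def[symmetric] g2_def[symmetric] by (simp add: mem_Times_iff)
  moreover have "osc_mult g2 h3 = osc_mult g (osc_mult h1 (osc_mult h2 h3))"
    by (simp only: g2_def g1_def osc_mult_assoc)
  ultimately show "\<exists>h\<in>H. osc_mult g h \<in> ?K"
    by (metis (no_types))
qed

lemma osc_gen_subset_osc_grid:
  assumes rot: "(*) (cis lam) ` int_lattice a b = int_lattice a b"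
    and u: "u \<in> int_lattice a b" and v: "v \<in> int_lattice a b" and \<xi>: "\<xi> \<in> int_lattice a b"
    and \<zeta>: "\<exists>j::int. \<zeta> = of_int j * (Im (cnj a * b) / 2)"
  shows "osc_gen {(u, 0, 0), (v, 0, 0), (0, \<zeta>, 0), (\<xi>, z, lam)} \<subseteq> osc_grid a b z lam"
proof (rule osc_gen_minimal[OF _ osc_grid_subgroup[OF rot]])
  obtain j :: int where j: "\<zeta> = of_int j * (Im (cnj a * b) / 2)"
    using \<zeta> by blast
  have "(0, \<zeta>, 0) \<in> osc_grid a b z lam"
    unfolding osc_grid_iff using j by (intro exI[of _ 0] exI[of _ j]) simp
  moreover have "(u, 0, 0) \<in> osc_grid a b z lam" "(v, 0, 0) \<in> osc_grid a b z lam"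
    unfolding osc_grid_iff using u v by (auto intro!: exI[of _ 0])
  moreover have "(\<xi>, z, lam) \<in> osc_grid a b z lam"
    unfolding osc_grid_iff using \<xi> by (intro exI[of _ 1] exI[of _ 0]) simp
  ultimately show "{(u, 0, 0), (v, 0, 0), (0, \<zeta>, 0), (\<xi>, z, lam)} \<subseteq> osc_grid a b z lam"
    by simp
qed

lemma osc_lattice_osc_gen:
  fixes N :: nat
  assumes \<omega>: "Im (cnj a * b) \<noteq> 0" and lam: "lam \<noteq> 0" and N: "N > 0" and \<zeta>: "\<zeta> \<noteq> 0"
    and rot: "(*) (cis lam) ` int_lattice a b = int_lattice a b"
    and \<xi>: "of_nat N * \<xi> \<in> int_lattice a b"
    and \<zeta>_grid: "\<exists>j::int. \<zeta> = of_int j * (Im (cnj a * b) / (2 * of_nat N ^ 2))"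
  shows "osc_lattice (osc_gen {(a, 0, 0), (b, 0, 0), (0, \<zeta>, 0), (\<xi>, z, lam)})"
proof -
  define G where "G = osc_gen {(a, 0, 0), (b, 0, 0), (0, \<zeta>, 0), (\<xi>, z, lam)}"
  define c :: complex where "c = of_real (1 / of_nat N)"
  let ?\<Lambda> = "int_lattice (c * a) (c * b)"
  have \<Lambda>: "?\<Lambda> = (*) c ` int_lattice a b"
    by (rule int_lattice_scale)
  have "(*) (cis lam) ` ?\<Lambda> = (*) c ` ((*) (cis lam) ` int_lattice a b)"
    unfolding \<Lambda> image_image by (simp add: mult.left_commute)
  then have rot\<Lambda>: "(*) (cis lam) ` ?\<Lambda> = ?\<Lambda>"
    by (simp only: rot \<Lambda>)
  have "Im (cnj (c * a) * (c * b)) = (1 / of_nat N) * (1 / of_nat N) * Im (cnj a * b)"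
    by (simp add: c_def mult.left_commute flip: mult.assoc)
  then have \<omega>\<Lambda>: "Im (cnj (c * a) * (c * b)) = Im (cnj a * b) / of_nat N ^ 2"
    by (simp add: power2_eq_square)
  have in_\<Lambda>: "v \<in> ?\<Lambda>" if "of_nat N * v \<in> int_lattice a b" for v
  proof -
    have "v = c * (of_nat N * v)" using N by (simp add: c_def)
    then show ?thesis using that \<Lambda> by blast
  qed
  have "G \<subseteq> osc_grid (c * a) (c * b) z lam"
    unfolding G_def
  proof (rule osc_gen_subset_osc_grid[OF rot\<Lambda>])
    show "a \<in> ?\<Lambda>" "b \<in> ?\<Lambda>"
      by (intro in_\<Lambda> int_lattice_memI[of _ "int N" _ 0] int_lattice_memI[of _ 0 _ "int N"]; simp)+
    show "\<xi> \<in> ?\<Lambda>" using \<xi> by (rule in_\<Lambda>)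
    show "\<exists>j::int. \<zeta> = of_int j * (Im (cnj (c * a) * (c * b)) / 2)"
      unfolding \<omega>\<Lambda> using \<zeta>_grid by (simp add: mult.commute)
  qed
  moreover have "Im (cnj (c * a) * (c * b)) \<noteq> 0"
    unfolding \<omega>\<Lambda> using \<omega> N by simp
  ultimately have "osc_discrete G"
    by (intro osc_discrete_if_separated[OF osc_grid_separated[OF _ lam]])
  moreover have "osc_cocompact G"
    unfolding G_def by (rule osc_cocompact_if_generators[where \<xi> = \<xi> and w = z, OF osc_subgroup_osc_gen _ _ _ _ \<omega> \<zeta> lam])
      (simp_all add: osc_gen.gen_base)
  ultimately show ?thesis
    by (simp add: osc_lattice_def osc_subgroup_osc_gen G_def)
qed

lemma int_lattice_half_turn: "(*) (cis pi) ` int_lattice a b = int_lattice a b"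
  by (rule int_lattice_mult_image) (simp_all add: int_lattice_uminus)

lemma square_lattice_quarter_turn: "(*) (cis (pi / 2)) ` int_lattice 1 \<i> = int_lattice 1 \<i>"
  by (rule int_lattice_mult_image) (simp_all add: int_lattice_uminus)

lemma hexagonal_lattice_sixth_turn:
  "(*) (cis (pi / 3)) ` int_lattice a (a * cis (2 * pi / 3)) = int_lattice a (a * cis (2 * pi / 3))"
proof (rule int_lattice_mult_image)
  let ?\<epsilon> = "cis (pi / 3)" and ?\<tau> = "cis (2 * pi / 3)"
  have sum: "?\<epsilon> = 1 + ?\<tau>"
    by (simp add: complex_eq_iff cos_60 sin_60 cos_120 sin_120)
  have prod: "?\<epsilon> * ?\<tau> = -1" "cis (- (pi / 3)) * ?\<tau> = 1 + ?\<tau>"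
    by (simp_all add: cis_mult flip: sum)
  have inv: "cis (- (pi / 3)) = - ?\<tau>"
    by (simp add: complex_eq_iff cos_60 sin_60 cos_120 sin_120)
  show "?\<epsilon> * a \<in> int_lattice a (a * ?\<tau>)"
    by (rule int_lattice_memI[of _ 1 _ 1]) (simp add: sum algebra_simps)
  show "?\<epsilon> * (a * ?\<tau>) \<in> int_lattice a (a * ?\<tau>)"
    by (rule int_lattice_memI[of _ "- 1" _ 0]) (simp add: mult.left_commute prod(1))
  show "inverse ?\<epsilon> * a \<in> int_lattice a (a * ?\<tau>)"
    by (rule int_lattice_memI[of _ 0 _ "- 1"]) (simp add: inv)
  show "inverse ?\<epsilon> * (a * ?\<tau>) \<in> int_lattice a (a * ?\<tau>)"
    by (rule int_lattice_memI[of _ 1 _ 1]) (simp add: mult.left_commute prod(2) distrib_left)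
qed simp

definition standard_lattice :: "real \<Rightarrow> real \<Rightarrow> complex set" where
  "standard_lattice mu nu = int_lattice (Complex (1 / sqrt nu) 0) (Complex (- mu / sqrt nu) (sqrt nu))"

lemma osc_lattice_standard_generators:
  fixes r :: nat and lam mu nu x0 y0 z :: real
  assumes nu: "nu > 0" and r: "r > 0" and lam: "lam \<noteq> 0"
    and rot: "(*) (cis lam) ` standard_lattice mu nu = standard_lattice mu nu"
    and x0: "of_nat (2 * r) * x0 \<in> \<int>" and y0: "of_nat (2 * r) * y0 \<in> \<int>"
  shows "osc_lattice (osc_gen {(Complex (1 / sqrt nu) 0, 0, 0), (Complex (- mu / sqrt nu) (sqrt nu), 0, 0),
           (0, 1 / real r, 0), (Complex (x0 / sqrt nu - mu * y0 / sqrt nu) (sqrt nu * y0), z, lam)})"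
proof (rule osc_lattice_osc_gen[OF _ lam _ _ rot[unfolded standard_lattice_def]])
  let ?a = "Complex (1 / sqrt nu) 0" and ?b = "Complex (- mu / sqrt nu) (sqrt nu)"
  have \<omega>: "Im (cnj ?a * ?b) = 1"
    using nu by simp
  then show "Im (cnj ?a * ?b) \<noteq> 0" by simp
  show "2 * r > 0" "1 / real r \<noteq> 0"
    using r by simp_all
  show "\<exists>j::int. 1 / real r = of_int j * (Im (cnj ?a * ?b) / (2 * of_nat (2 * r) ^ 2))"
    unfolding \<omega> using r by (intro exI[of _ "8 * int r"]) (simp add: power2_eq_square)
  obtain X Y :: int where XY: "of_nat (2 * r) * x0 = of_int X" "of_nat (2 * r) * y0 = of_int Y"
    using x0 y0 by (metis Ints_cases)
  have "Complex (x0 / sqrt nu - mu * y0 / sqrt nu) (sqrt nu * y0) = of_real x0 * ?a + of_real y0 * ?b"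
    by (simp add: complex_eq_iff field_simps)
  then have "of_nat (2 * r) * Complex (x0 / sqrt nu - mu * y0 / sqrt nu) (sqrt nu * y0)
      = of_real (of_nat (2 * r) * x0) * ?a + of_real (of_nat (2 * r) * y0) * ?b"
    by (simp add: algebra_simps)
  also have "\<dots> = of_int X * ?a + of_int Y * ?b"
    by (simp only: XY of_real_of_int_eq)
  finally show "of_nat (2 * r) * Complex (x0 / sqrt nu - mu * y0 / sqrt nu) (sqrt nu * y0) \<in> int_lattice ?a ?b"
    by (rule int_lattice_memI)
qed

lemma standard_lattice_rotation_pi_multiple:
  "(*) (cis (pi * real n)) ` standard_lattice mu nu = standard_lattice mu nu"
  using int_lattice_rotation_power_image[OF int_lattice_half_turn, of "int n"]
  by (simp add: standard_lattice_def mult.commute)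

lemma standard_lattice_rotation_square:
  assumes lam: "lam = pi / 2 + 2 * pi * of_int k" and "Complex mu nu = \<i>"
  shows "nu > 0 \<and> lam \<noteq> 0 \<and> (*) (cis lam) ` standard_lattice mu nu = standard_lattice mu nu"
proof (intro conjI)
  have "mu = 0" "nu = 1"
    using assms(2) by (simp_all add: complex_eq_iff)
  then show "nu > 0" by simp
  have "Complex 1 0 = 1" "Complex 0 1 = \<i>"
    by (simp_all add: complex_eq_iff)
  with \<open>mu = 0\<close> \<open>nu = 1\<close> have \<Lambda>: "standard_lattice mu nu = int_lattice 1 \<i>"
    by (simp add: standard_lattice_def)
  have lam': "lam = of_int (1 + 4 * k) * (pi / 2)"
    using lam by (simp add: algebra_simps)
  have "1 + 4 * k \<noteq> 0" by presburger
  then show "lam \<noteq> 0" unfolding lam' by simp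
  show "(*) (cis lam) ` standard_lattice mu nu = standard_lattice mu nu"
    unfolding lam' \<Lambda> by (rule int_lattice_rotation_power_image[OF square_lattice_quarter_turn])
qed

lemma standard_lattice_rotation_hexagonal:
  assumes "lam = pi / 3 + 2 * pi * of_int k \<or> lam = 2 * pi / 3 + 2 * pi * of_int k"
    and "Complex mu nu = cis (pi / 3)"
  shows "nu > 0 \<and> lam \<noteq> 0 \<and> (*) (cis lam) ` standard_lattice mu nu = standard_lattice mu nu"
proof (intro conjI)
  have "mu = 1 / 2" "nu = sqrt 3 / 2"
    using assms(2) by (simp_all add: complex_eq_iff cos_60 sin_60)
  then show "nu > 0" unfolding \<open>nu = sqrt 3 / 2\<close> by simp
  obtain j :: int where lam: "lam = of_int j * (pi / 3)" and "j \<noteq> 0"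
  proof (cases "lam = pi / 3 + 2 * pi * of_int k")
    case True
    have "1 + 6 * k \<noteq> 0" by presburger
    then show ?thesis using True by (intro that[of "1 + 6 * k"]) (simp_all add: algebra_simps)
  next
    case False
    have "2 + 6 * k \<noteq> 0" by presburger
    then show ?thesis using False assms(1) by (intro that[of "2 + 6 * k"]) (simp_all add: algebra_simps)
  qed
  then show "lam \<noteq> 0" unfolding lam using \<open>j \<noteq> 0\<close> by simp
  define s where "s = sqrt (sqrt 3 / 2)"
  have "s * s = sqrt 3 / 2" "s > 0"
    by (simp_all add: s_def)
  then have b: "Complex (- (1 / 2) / s) s = Complex (1 / s) 0 * cis (2 * pi / 3)"
    by (simp add: complex_eq_iff cos_120' sin_120' field_simps)
  have \<Lambda>: "standard_lattice mu nu = int_lattice (Complex (1 / s) 0) (Complex (1 / s) 0 * cis (2 * pi / 3))"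
    unfolding standard_lattice_def \<open>mu = 1 / 2\<close> \<open>nu = sqrt 3 / 2\<close> s_def[symmetric] b ..
  show "(*) (cis lam) ` standard_lattice mu nu = standard_lattice mu nu"
    unfolding lam \<Lambda> by (rule int_lattice_rotation_power_image[OF hexagonal_lattice_sixth_turn])
qed

lemma mult_Ints_of_div:
  fixes x :: real
  assumes "r > 0" and "\<exists>m::int. x = of_int m / real r"
  shows "of_nat (2 * r) * x \<in> \<int>"
proof -
  obtain m :: int where "x = of_int m / real r" using assms(2) by blast
  then have "of_nat (2 * r) * x = of_int (2 * m)"
    using assms(1) by (simp add: field_simps)
  then show ?thesis by (metis Ints_of_int)
qed

lemma mult_Ints_of_half_plus_div:
  fixes x :: real
  assumes "r > 0" and "\<exists>m::int. x = 1 / 2 + of_int m / real r"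
  shows "of_nat (2 * r) * x \<in> \<int>"
proof -
  obtain m :: int where "x = 1 / 2 + of_int m / real r" using assms(2) by blast
  then have "of_nat (2 * r) * x = of_int (int r + 2 * m)"
    using assms(1) by (simp add: field_simps)
  then show ?thesis by (metis Ints_of_int)
qed

theorem lemma4p13:
  fixes r :: nat and lam mu nu x0 y0 z :: real
  assumes r_pos: "r > 0"
    and lam_cases: "(\<exists>n::nat. n > 0 \<and> lam = pi * real n)
                  \<or> (\<exists>k::int. lam = pi/2 + 2*pi*real_of_int k)
                  \<or> (\<exists>k::int. lam = pi/3 + 2*pi*real_of_int k)
                  \<or> (\<exists>k::int. lam = 2*pi/3 + 2*pi*real_of_int k)"
    and case_i: "(\<exists>n::nat. n > 0 \<and> lam = pi * real n) \<longrightarrow>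
        nu > 0 \<and> (\<exists>m::int. x0 = real_of_int m / real r) \<and> (\<exists>m::int. y0 = real_of_int m / real r)"
    and case_ii: "(\<exists>k::int. lam = pi/2 + 2*pi*real_of_int k) \<longrightarrow>
        Complex mu nu = \<i> \<and> (\<exists>m::int. x0 = real_of_int m / real r) \<and> (\<exists>m::int. y0 = real_of_int m / real r)"
    and case_iii: "(\<exists>k::int. lam = pi/3 + 2*pi*real_of_int k) \<longrightarrow>
        Complex mu nu = cis (pi/3) \<and> (\<exists>m::int. x0 = 1/2 + real_of_int m / real r)
          \<and> (\<exists>m::int. y0 = real_of_int m / real r)"
    and case_iv: "(\<exists>k::int. lam = 2*pi/3 + 2*pi*real_of_int k) \<longrightarrow>
        Complex mu nu = cis (pi/3) \<and> (\<exists>m::int. x0 = real_of_int m / real r)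
          \<and> (\<exists>m::int. y0 = 1/2 + real_of_int m / real r)"
  shows "osc_lattice (osc_gen
           { (Complex (1 / sqrt nu) 0, 0, 0),
             (Complex (- mu / sqrt nu) (sqrt nu), 0, 0),
             (0, 1 / real r, 0),
             (Complex (x0 / sqrt nu - mu * y0 / sqrt nu) (sqrt nu * y0), z, lam) })"
proof -
  have "nu > 0 \<and> lam \<noteq> 0 \<and> (*) (cis lam) ` standard_lattice mu nu = standard_lattice mu nu
      \<and> of_nat (2 * r) * x0 \<in> \<int> \<and> of_nat (2 * r) * y0 \<in> \<int>"
    using lam_cases
  proof (elim disjE exE conjE)
    fix n :: nat assume "n > 0" "lam = pi * real n"
    then show ?thesis
      using case_i standard_lattice_rotation_pi_multiple[of n mu nu] mult_Ints_of_div[OF r_pos] by auto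
  next
    fix k :: int assume k: "lam = pi / 2 + 2 * pi * of_int k"
    then show ?thesis
      using case_ii standard_lattice_rotation_square[OF k] mult_Ints_of_div[OF r_pos] by blast
  next
    fix k :: int assume "lam = pi / 3 + 2 * pi * of_int k"
    then show ?thesis
      using case_iii standard_lattice_rotation_hexagonal[of lam k]
        mult_Ints_of_div[OF r_pos] mult_Ints_of_half_plus_div[OF r_pos] by blast
  next
    fix k :: int assume "lam = 2 * pi / 3 + 2 * pi * of_int k"
    then show ?thesis
      using case_iv standard_lattice_rotation_hexagonal[of lam k]
        mult_Ints_of_div[OF r_pos] mult_Ints_of_half_plus_div[OF r_pos] by blast
  qed
  then show ?thesis
    using osc_lattice_standard_generators[OF _ r_pos] by blast
qed

end
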